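(* Under the standing assumptions in the context, there exist a neighborhood $\mathcal U$ of $(0,\bar X)$ and $C>0$ such that for every $(t,X)\in\mathcal U\cap\{t>0\}$, \[ |\partial_t\lambda_1|\le C a,\qquad |\partial_t\lambda_2|\le C,\qquad |\partial_t\lambda_3|\le C . \]
   Context: Let $W\subset\mathbb R^l$ be open, $\bar X\in W$, $c,T>0$, and let $a(t,X),b(t,X)$ be real-valued $C^\infty$ functions on $(-c,T)\times W$ with bounded derivatives of all orders. Assume $\Delta(t,X):=4a(t,X)^3-27b(t,X)^2\ge 0$ on $[0,T)\times W$, $a(0,\bar X)=0$, and $a(t,X)>0$ on $(0,T)\times W$. Let $S(t,X)=\begin{bmatrix}3&0&-a\\0&2a&3b\\-a&3b&a^2\end{bmatrix}$ and let $0\le\lambda_1\le\lambda_2\le\lambda_3$ be its eigenvalues (smooth on $\mathcal U\cap\{t>0\}$ for a small neighborhood $\mathcal U$ of $(0,\bar X)$). *)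

theory Defs
  imports "HOL-Analysis.Analysis"
begin

fun dderiv :: "'a::real_normed_vector list \<Rightarrow> ('a \<Rightarrow> real) \<Rightarrow> 'a \<Rightarrow> real" where
  "dderiv [] f = f"
| "dderiv (v # vs) f = (\<lambda>p. frechet_derivative (dderiv vs f) (at p) v)"

definition smooth_bdd_on :: "'a::euclidean_space set \<Rightarrow> ('a \<Rightarrow> real) \<Rightarrow> bool" where
  "smooth_bdd_on U f \<longleftrightarrow>
     (\<forall>vs. set vs \<subseteq> Basis \<longrightarrow>
        (\<forall>p\<in>U. dderiv vs f differentiable (at p)) \<and> bounded (dderiv vs f ` U))"

definition Smat :: "real \<Rightarrow> real \<Rightarrow> real^3^3" where
  "Smat a b = vector [vector [3, 0, - a], vector [0, 2 * a, 3 * b], vector [- a, 3 * b, a ^ 2]]"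

definition eigs :: "real^3^3 \<Rightarrow> real \<times> real \<times> real" where
  "eigs M = (THE (l1, l2, l3). l1 \<le> l2 \<and> l2 \<le> l3 \<and>
       (\<forall>\<mu>. det (mat \<mu> - M) = (\<mu> - l1) * (\<mu> - l2) * (\<mu> - l3)))"

definition lam1 :: "real^3^3 \<Rightarrow> real" where "lam1 M = fst (eigs M)"
definition lam2 :: "real^3^3 \<Rightarrow> real" where "lam2 M = fst (snd (eigs M))"
definition lam3 :: "real^3^3 \<Rightarrow> real" where "lam3 M = snd (snd (eigs M))"

end

theory Submission
  imports Defs
begin

(*
  For small a > 0 the characteristic polynomial P = det (mu I - S) changes sign so as to trap its
  roots in [0, a^2), (a, 3a) and (2, 5). The roots are therefore simple, and implicit
  differentiation gives lambda_i' = - (d/dt P)(lambda_i) / prod_{j ~= i} (lambda_i - lambda_j),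
  with denominators of order a, a and 1. The numerators are of order a^2, a and 1 once the term
  b b' of d/dt P is known to be O(a^2), and this is where the discriminant condition enters:
  b^2 <= a^3 with a' and b'' bounded forces b' = O(a^(1/2)), a Glaeser-type inequality.
*)

section \<open>Characteristic polynomial and location of the eigenvalues\<close>

definition S_charpoly :: "real \<Rightarrow> real \<Rightarrow> real \<Rightarrow> real" where
  "S_charpoly x y \<mu> =
     \<mu>^3 - (3 + 2*x + x^2) * \<mu>^2 + (6*x + 2*x^2 + 2*x^3 - 9*y^2) * \<mu> - (4*x^3 - 27*y^2)"

lemma det_Smat: "det (mat \<mu> - Smat x y) = S_charpoly x y \<mu>"
  by (simp add: S_charpoly_def det_3 Smat_def mat_def algebra_simps power2_eq_square power3_eq_cube)

lemma cubic_eq_prod_of_roots: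
  fixes A B D z1 z2 z3 :: real
  assumes r1: "z1^3 - A*z1^2 + B*z1 - D = 0" and r2: "z2^3 - A*z2^2 + B*z2 - D = 0"
    and r3: "z3^3 - A*z3^2 + B*z3 - D = 0" and "z1 < z2" "z2 < z3"
  shows "\<mu>^3 - A*\<mu>^2 + B*\<mu> - D = (\<mu> - z1) * (\<mu> - z2) * (\<mu> - z3)"
proof -
  have "(z1 - z2) * (z1^2 + z1*z2 + z2^2 - A*(z1 + z2) + B) = 0"
    using r1 r2 by (simp add: algebra_simps power2_eq_square power3_eq_cube)
  hence e12: "z1^2 + z1*z2 + z2^2 - A*(z1 + z2) + B = 0" using assms by simp
  have "(z1 - z3) * (z1^2 + z1*z3 + z3^2 - A*(z1 + z3) + B) = 0"
    using r1 r3 by (simp add: algebra_simps power2_eq_square power3_eq_cube)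
  hence e13: "z1^2 + z1*z3 + z3^2 - A*(z1 + z3) + B = 0" using assms by simp
  have "(z2 - z3) * (z1 + z2 + z3 - A) = 0"
    using e12 e13 by (simp add: algebra_simps power2_eq_square)
  hence A: "A = z1 + z2 + z3" using assms by simp
  have B: "B = z1*z2 + z1*z3 + z2*z3"
    using e12 A by (simp add: algebra_simps power2_eq_square)
  have D: "D = z1*z2*z3"
    using r1 A B by (simp add: algebra_simps power2_eq_square power3_eq_cube)
  show ?thesis unfolding A B D by (simp add: algebra_simps power2_eq_square power3_eq_cube)
qed

lemma eigs_eqI:
  assumes char: "\<And>\<mu>. det (mat \<mu> - M) = (\<mu> - z1) * (\<mu> - z2) * (\<mu> - z3)"
    and "z1 < z2" "z2 < z3"
  shows "eigs M = (z1, z2, z3)"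
  unfolding eigs_def
proof (rule the_equality)
  fix p assume "case p of (l1, l2, l3) \<Rightarrow> l1 \<le> l2 \<and> l2 \<le> l3 \<and>
    (\<forall>\<mu>. det (mat \<mu> - M) = (\<mu> - l1) * (\<mu> - l2) * (\<mu> - l3))"
  then obtain l1 l2 l3 where p: "p = (l1, l2, l3)" "l1 \<le> l2" "l2 \<le> l3"
    and l: "\<And>\<mu>. (\<mu> - z1) * (\<mu> - z2) * (\<mu> - z3) = (\<mu> - l1) * (\<mu> - l2) * (\<mu> - l3)"
    using char by (cases p) auto
  have "z1 \<in> {l1, l2, l3}" "z2 \<in> {l1, l2, l3}" "z3 \<in> {l1, l2, l3}"
    using l[of z1] l[of z2] l[of z3] by auto
  thus "p = (z1, z2, z3)" using p assms(2,3) by auto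
qed (use assms in auto)

lemma S_charpoly_signs:
  fixes x y :: real
  assumes "0 < x" "x \<le> 1/10" "27*y^2 \<le> 4*x^3"
  shows "S_charpoly x y 0 \<le> 0" "S_charpoly x y (x^2) > 0" "S_charpoly x y x > 0"
    "S_charpoly x y (3*x) < 0" "S_charpoly x y 2 < 0" "S_charpoly x y 5 > 0"
proof -
  have x4: "x^4 \<le> x^3/10" and x3: "x^3 \<le> x^2/10" and x2: "x^2 \<le> x/10"
    using assms by (simp_all add: power2_eq_square power3_eq_cube power4_eq_xxxx mult_left_mono)
  have pos: "0 < x^2" "0 < x^3" "0 < x^4" using assms by auto
  have y: "0 \<le> y^2*(27 - 9*x^2)" "9*x*y^2 \<le> 27*y^2" "0 \<le> x*y^2"
    using assms x2 by (auto intro!: mult_nonneg_nonneg mult_right_mono)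
  have "S_charpoly x y 0 = 27*y^2 - 4*x^3"
    "S_charpoly x y (x^2) = 2*x^3 - x^4 + y^2*(27 - 9*x^2)"
    "S_charpoly x y x = 3*x^2 - 3*x^3 + x^4 + 27*y^2 - 9*x*y^2"
    "S_charpoly x y (3*x) = -9*x^2 + 11*x^3 - 3*x^4 + 27*y^2 - 27*(x*y^2)"
    "S_charpoly x y 2 = -4 + 4*x + 9*y^2"
    "S_charpoly x y 5 = 50 - 20*x - 15*x^2 + 6*x^3 - 18*y^2"
    by (simp_all add: S_charpoly_def algebra_simps power2_eq_square power3_eq_cube power4_eq_xxxx)
  with assms x4 x3 x2 pos y show
    "S_charpoly x y 0 \<le> 0" "S_charpoly x y (x^2) > 0" "S_charpoly x y x > 0"
    "S_charpoly x y (3*x) < 0" "S_charpoly x y 2 < 0" "S_charpoly x y 5 > 0"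
    by linarith+
qed

lemma Smat_eigs_location:
  fixes x y :: real
  assumes "0 < x" "x \<le> 1/10" "27*y^2 \<le> 4*x^3"
  shows "0 \<le> lam1 (Smat x y)" "lam1 (Smat x y) < x^2"
    "x < lam2 (Smat x y)" "lam2 (Smat x y) < 3*x"
    "2 < lam3 (Smat x y)" "lam3 (Smat x y) < 5"
    "S_charpoly x y \<mu> = (\<mu> - lam1 (Smat x y)) * (\<mu> - lam2 (Smat x y)) * (\<mu> - lam3 (Smat x y))"
proof -
  note signs = S_charpoly_signs[OF assms]
  have cont: "continuous_on A (S_charpoly x y)" for A
    unfolding S_charpoly_def by (intro continuous_intros)
  obtain z1 where "0 \<le> z1" "z1 \<le> x^2" "S_charpoly x y z1 = 0"
    using IVT'[of "S_charpoly x y" 0 0 "x^2", OF signs(1) less_imp_le[OF signs(2)] _ cont] by auto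
  with signs(2) have z1: "0 \<le> z1" "z1 < x^2" "S_charpoly x y z1 = 0"
    by (auto simp: order.order_iff_strict)
  obtain z2 where "x \<le> z2" "z2 \<le> 3*x" "S_charpoly x y z2 = 0"
    using IVT2'[of "S_charpoly x y" "3*x" 0 x, OF less_imp_le[OF signs(4)] less_imp_le[OF signs(3)] _ cont]
      assms(1) by auto
  with signs(3,4) have z2: "x < z2" "z2 < 3*x" "S_charpoly x y z2 = 0"
    by (auto simp: order.order_iff_strict)
  obtain z3 where "2 \<le> z3" "z3 \<le> 5" "S_charpoly x y z3 = 0"
    using IVT'[of "S_charpoly x y" 2 0 5, OF less_imp_le[OF signs(5)] less_imp_le[OF signs(6)] _ cont] by auto
  with signs(5,6) have z3: "2 < z3" "z3 < 5" "S_charpoly x y z3 = 0"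
    by (auto simp: order.order_iff_strict)
  have "x^2 < x" using assms by (simp add: power2_eq_square)
  hence lt: "z1 < z2" "z2 < z3" using z1 z2 z3 assms by auto
  have factor: "S_charpoly x y \<mu> = (\<mu> - z1) * (\<mu> - z2) * (\<mu> - z3)" for \<mu>
    unfolding S_charpoly_def
    by (rule cubic_eq_prod_of_roots) (use z1(3) z2(3) z3(3) lt in \<open>simp_all add: S_charpoly_def\<close>)
  have "eigs (Smat x y) = (z1, z2, z3)"
    by (rule eigs_eqI) (use factor lt in \<open>simp_all add: det_Smat\<close>)
  hence "lam1 (Smat x y) = z1" "lam2 (Smat x y) = z2" "lam3 (Smat x y) = z3"
    by (simp_all add: lam1_def lam2_def lam3_def)
  thus "0 \<le> lam1 (Smat x y)" "lam1 (Smat x y) < x^2"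
    "x < lam2 (Smat x y)" "lam2 (Smat x y) < 3*x"
    "2 < lam3 (Smat x y)" "lam3 (Smat x y) < 5"
    "S_charpoly x y \<mu> = (\<mu> - lam1 (Smat x y)) * (\<mu> - lam2 (Smat x y)) * (\<mu> - lam3 (Smat x y))"
    using z1 z2 z3 factor by simp_all
qed

section \<open>A Glaeser-type inequality\<close>

lemma abs_diff_le_of_deriv_bound:
  fixes g g' :: "real \<Rightarrow> real"
  assumes "0 < h" "\<And>s. s \<in> {t..t+h} \<Longrightarrow> (g has_real_derivative g' s) (at s)"
    and "\<And>s. s \<in> {t..t+h} \<Longrightarrow> \<bar>g' s\<bar> \<le> L"
  shows "\<bar>g (t + h) - g t\<bar> \<le> L * h"
proof -
  obtain z where z: "t < z" "z < t + h" "g (t + h) - g t = h * g' z"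
    using MVT2[of t "t + h" g g'] assms by auto
  thus ?thesis using assms(1) assms(3)[of z] by (simp add: abs_mult mult.commute mult_left_mono)
qed

lemma abs_taylor_remainder_le:
  fixes g g' g'' :: "real \<Rightarrow> real"
  assumes h: "0 < h" and g': "\<And>s. s \<in> {t..t+h} \<Longrightarrow> (g has_real_derivative g' s) (at s)"
    and g'': "\<And>s. s \<in> {t..t+h} \<Longrightarrow> (g' has_real_derivative g'' s) (at s)"
    and M: "\<And>s. s \<in> {t..t+h} \<Longrightarrow> \<bar>g'' s\<bar> \<le> M"
  shows "\<bar>g (t + h) - g t - h * g' t\<bar> \<le> M * h^2"
proof -
  have "((\<lambda>s. g s - s * g' t) has_real_derivative g' s - g' t) (at s)" if "s \<in> {t..t+h}" for s
    using g'[OF that] by (auto intro!: derivative_eq_intros)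
  then obtain z where z: "t < z" "z < t + h"
    "(g (t + h) - (t + h) * g' t) - (g t - t * g' t) = (t + h - t) * (g' z - g' t)"
    using MVT2[of t "t + h" "\<lambda>s. g s - s * g' t" "\<lambda>s. g' s - g' t"] h by auto
  have "\<bar>g' (t + (z - t)) - g' t\<bar> \<le> M * (z - t)"
    by (rule abs_diff_le_of_deriv_bound[where g'=g'']) (use z g'' M in auto)
  also have "\<dots> \<le> M * h"
    using z M[of t] h by (intro mult_left_mono) auto
  finally have "h * \<bar>g' z - g' t\<bar> \<le> h * (M * h)" using h by simp
  moreover have "g (t + h) - g t - h * g' t = h * (g' z - g' t)"
    using z(3) by (simp add: algebra_simps)
  ultimately show ?thesis using h by (simp add: abs_mult power2_eq_square mult.assoc)
qed

lemma abs_le_sqrt_cube: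
  fixes x y :: real
  assumes "y^2 \<le> x^3" "0 \<le> x"
  shows "\<bar>y\<bar> \<le> sqrt x ^ 3"
proof (rule power2_le_imp_le)
  have "(sqrt x ^ 3)^2 = (sqrt x ^ 2)^3" by (simp only: power_mult[symmetric] mult.commute)
  thus "\<bar>y\<bar>^2 \<le> (sqrt x ^ 3)^2" using assms by simp
qed (use assms in simp)

text \<open>Compare \<open>\<beta>\<close> at \<open>t\<close> and \<open>t + h\<close> with the step \<open>h = \<alpha> t\<close>: both values are
  \<open>O(h powr (3/2))\<close>, and by Taylor's formula they differ by \<open>h * \<beta>' t + O(h\<^sup>2)\<close>.\<close>
lemma abs_deriv_le_of_sq_le_cube:
  fixes \<alpha> \<alpha>' \<beta> \<beta>' \<beta>'' :: "real \<Rightarrow> real"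
  assumes h: "0 < \<alpha> t" "\<alpha> t \<le> 1"
    and \<alpha>': "\<And>s. s \<in> {t..t + \<alpha> t} \<Longrightarrow> (\<alpha> has_real_derivative \<alpha>' s) (at s)"
      "\<And>s. s \<in> {t..t + \<alpha> t} \<Longrightarrow> \<bar>\<alpha>' s\<bar> \<le> L"
    and \<beta>': "\<And>s. s \<in> {t..t + \<alpha> t} \<Longrightarrow> (\<beta> has_real_derivative \<beta>' s) (at s)"
    and \<beta>'': "\<And>s. s \<in> {t..t + \<alpha> t} \<Longrightarrow> (\<beta>' has_real_derivative \<beta>'' s) (at s)"
      "\<And>s. s \<in> {t..t + \<alpha> t} \<Longrightarrow> \<bar>\<beta>'' s\<bar> \<le> M"
    and cusp: "\<And>s. s \<in> {t..t + \<alpha> t} \<Longrightarrow> 0 \<le> \<alpha> s \<and> (\<beta> s)^2 \<le> (\<alpha> s)^3"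
  shows "\<bar>\<beta>' t\<bar> \<le> ((1 + L)^2 + 1 + M) * sqrt (\<alpha> t)"
proof -
  define h where "h = \<alpha> t"
  define \<sigma> where "\<sigma> = sqrt h"
  have h0: "0 < h" and \<sigma>0: "0 < \<sigma>" and \<sigma>1: "\<sigma> \<le> 1" and h\<sigma>: "h = \<sigma>^2"
    using h by (simp_all add: h_def \<sigma>_def)
  have ends: "t \<in> {t..t + \<alpha> t}" "t + h \<in> {t..t + \<alpha> t}" using h0 by (auto simp: h_def)
  have L0: "0 \<le> L" and M0: "0 \<le> M"
    using \<alpha>'(2)[OF ends(1)] \<beta>''(2)[OF ends(1)] by linarith+
  have "\<bar>\<alpha> (t + h) - \<alpha> t\<bar> \<le> L * h"
    by (rule abs_diff_le_of_deriv_bound[where g'=\<alpha>']) (use h0 \<alpha>' in \<open>auto simp: h_def\<close>)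
  hence "\<alpha> (t + h) \<le> (1 + L) * h" by (simp add: h_def algebra_simps abs_le_iff)
  hence "sqrt (\<alpha> (t + h)) \<le> sqrt (1 + L) * \<sigma>" by (simp add: \<sigma>_def flip: real_sqrt_mult)
  hence "sqrt (\<alpha> (t + h)) ^ 3 \<le> (sqrt (1 + L) * \<sigma>) ^ 3"
    using cusp[OF ends(2)] by (intro power_mono) auto
  also have "\<dots> \<le> sqrt (1 + L) ^ 4 * \<sigma> ^ 3"
    unfolding power_mult_distrib using L0 \<sigma>0 by (intro mult_right_mono power_increasing) auto
  also have "sqrt (1 + L) ^ 4 = (1 + L)^2"
    using L0 power_mult[of "sqrt (1 + L)" 2 2] by simp
  finally have \<beta>_step: "\<bar>\<beta> (t + h)\<bar> \<le> (1 + L)^2 * \<sigma>^3"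
    using abs_le_sqrt_cube[of "\<beta> (t + h)" "\<alpha> (t + h)"] cusp[OF ends(2)] by linarith
  have \<beta>_t: "\<bar>\<beta> t\<bar> \<le> \<sigma>^3"
    using abs_le_sqrt_cube[of "\<beta> t" "\<alpha> t"] cusp[OF ends(1)] by (simp add: \<sigma>_def h_def)
  have "\<bar>\<beta> (t + h) - \<beta> t - h * \<beta>' t\<bar> \<le> M * h^2"
    by (rule abs_taylor_remainder_le[where g''=\<beta>'']) (use h0 \<beta>' \<beta>'' in \<open>auto simp: h_def\<close>)
  hence "h * \<bar>\<beta>' t\<bar> \<le> \<bar>\<beta> (t + h)\<bar> + \<bar>\<beta> t\<bar> + M * h^2"
    using h0 by (simp add: abs_le_iff abs_mult) linarith
  also have "\<dots> \<le> (1 + L)^2 * \<sigma>^3 + \<sigma>^3 + M * \<sigma>^3"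
  proof -
    have "\<sigma>^4 \<le> \<sigma>^3" using \<sigma>0 \<sigma>1 by (intro power_decreasing) auto
    hence "M * h^2 \<le> M * \<sigma>^3" using M0 unfolding h\<sigma> by (simp add: mult_left_mono flip: power_mult)
    thus ?thesis using \<beta>_step \<beta>_t by linarith
  qed
  finally have "\<sigma>^2 * \<bar>\<beta>' t\<bar> \<le> \<sigma>^2 * (((1 + L)^2 + 1 + M) * \<sigma>)"
    unfolding h\<sigma> by (simp add: algebra_simps power2_eq_square power3_eq_cube)
  thus ?thesis using \<sigma>0 by (simp add: \<sigma>_def h_def)
qed

lemma abs_mult_deriv_le_of_sq_le_cube:
  fixes \<alpha> \<alpha>' \<beta> \<beta>' \<beta>'' :: "real \<Rightarrow> real"
  assumes "0 < \<alpha> t" "\<alpha> t \<le> 1"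
    and "\<And>s. s \<in> {t..t + \<alpha> t} \<Longrightarrow> (\<alpha> has_real_derivative \<alpha>' s) (at s)"
      "\<And>s. s \<in> {t..t + \<alpha> t} \<Longrightarrow> \<bar>\<alpha>' s\<bar> \<le> L"
    and "\<And>s. s \<in> {t..t + \<alpha> t} \<Longrightarrow> (\<beta> has_real_derivative \<beta>' s) (at s)"
    and "\<And>s. s \<in> {t..t + \<alpha> t} \<Longrightarrow> (\<beta>' has_real_derivative \<beta>'' s) (at s)"
      "\<And>s. s \<in> {t..t + \<alpha> t} \<Longrightarrow> \<bar>\<beta>'' s\<bar> \<le> M"
    and cusp: "\<And>s. s \<in> {t..t + \<alpha> t} \<Longrightarrow> 0 \<le> \<alpha> s \<and> (\<beta> s)^2 \<le> (\<alpha> s)^3"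
  shows "\<bar>\<beta> t * \<beta>' t\<bar> \<le> ((1 + L)^2 + 1 + M) * (\<alpha> t)^2"
proof -
  have "\<bar>\<beta> t\<bar> \<le> sqrt (\<alpha> t) ^ 3"
    using cusp[of t] assms(1) by (intro abs_le_sqrt_cube) auto
  moreover have "\<bar>\<beta>' t\<bar> \<le> ((1 + L)^2 + 1 + M) * sqrt (\<alpha> t)"
    using assms by (rule abs_deriv_le_of_sq_le_cube)
  ultimately have "\<bar>\<beta> t * \<beta>' t\<bar> \<le> sqrt (\<alpha> t) ^ 3 * (((1 + L)^2 + 1 + M) * sqrt (\<alpha> t))"
    unfolding abs_mult using assms(1) by (intro mult_mono) auto
  also have "\<dots> = ((1 + L)^2 + 1 + M) * (sqrt (\<alpha> t) ^ 2)^2"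
    by (simp add: power2_eq_square power3_eq_cube ac_simps)
  finally show ?thesis using assms(1) by simp
qed

section \<open>Differentiability of simple roots\<close>

lemma isCont_simple_root:
  fixes P :: "real \<Rightarrow> real \<Rightarrow> real" and r u v :: "real \<Rightarrow> real"
  assumes factor: "eventually (\<lambda>s. \<forall>\<mu>. P s \<mu> = (\<mu> - r s) * (\<mu> - u s) * (\<mu> - v s)) (nhds t)"
    and cont: "isCont (\<lambda>s. P s (r t)) t"
    and sep: "eventually (\<lambda>s. \<delta> \<le> \<bar>r t - u s\<bar> \<and> \<delta> \<le> \<bar>r t - v s\<bar>) (nhds t)" and "\<delta> > 0"
  shows "isCont r t"
proof -
  have "P t (r t) = 0" using eventually_nhds_x_imp_x[OF factor] by simp
  hence "((\<lambda>s. \<bar>P s (r t)\<bar> / \<delta>\<^sup>2) \<longlongrightarrow> 0) (at t)"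
    using cont by (auto simp: isCont_def intro!: tendsto_divide_zero tendsto_rabs_zero)
  moreover have "eventually (\<lambda>s. norm (r s - r t) \<le> \<bar>P s (r t)\<bar> / \<delta>\<^sup>2) (nhds t)"
    using factor sep
  proof eventually_elim
    case (elim s)
    have "\<delta>\<^sup>2 \<le> \<bar>(r t - u s) * (r t - v s)\<bar>"
      using elim(2) \<open>\<delta> > 0\<close> by (simp add: abs_mult power2_eq_square mult_mono)
    hence "\<bar>r s - r t\<bar> * \<delta>\<^sup>2 \<le> \<bar>r s - r t\<bar> * \<bar>(r t - u s) * (r t - v s)\<bar>"
      by (simp add: mult_left_mono)
    also have "\<dots> = \<bar>P s (r t)\<bar>"
    proof -
      have "P s (r t) = (r t - r s) * ((r t - u s) * (r t - v s))"
        using elim(1)[rule_format, of "r t"] by (simp add: algebra_simps)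
      thus ?thesis by (simp add: abs_mult abs_minus_commute)
    qed
    finally show ?case using \<open>\<delta> > 0\<close> by (simp add: field_simps)
  qed
  hence "eventually (\<lambda>s. norm (r s - r t) \<le> \<bar>P s (r t)\<bar> / \<delta>\<^sup>2) (at t)"
    by (simp add: eventually_at_filter eventually_mono)
  ultimately have "((\<lambda>s. r s - r t) \<longlongrightarrow> 0) (at t)"
    by (rule Lim_null_comparison[rotated])
  thus ?thesis by (simp add: isCont_def LIM_zero_iff)
qed

text \<open>Since \<open>P s (r t) = (r t - r s) * (r t - u s) * (r t - v s)\<close>, the difference quotient of
  \<open>r\<close> at \<open>t\<close> is minus that of \<open>\<lambda>s. P s (r t)\<close>, divided by a factor tending to
  \<open>(r t - u t) * (r t - v t)\<close>.\<close>
lemma DERIV_simple_root: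
  fixes P :: "real \<Rightarrow> real \<Rightarrow> real" and r u v :: "real \<Rightarrow> real"
  assumes factor: "eventually (\<lambda>s. \<forall>\<mu>. P s \<mu> = (\<mu> - r s) * (\<mu> - u s) * (\<mu> - v s)) (nhds t)"
    and deriv: "((\<lambda>s. P s (r t)) has_real_derivative P') (at t)"
    and "isCont u t" "isCont v t" and simple: "(r t - u t) * (r t - v t) \<noteq> 0"
  shows "(r has_real_derivative - P' / ((r t - u t) * (r t - v t))) (at t)"
proof -
  define Q where "Q s = (r t - u s) * (r t - v s)" for s
  have P0: "P t (r t) = 0" using eventually_nhds_x_imp_x[OF factor] by simp
  have "isCont Q t" unfolding Q_def using assms(3,4) by (intro continuous_intros)
  hence Q: "(Q \<longlongrightarrow> Q t) (at t)" by (simp add: isCont_def)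
  have "eventually (\<lambda>s. Q s \<noteq> 0) (at t)"
    using tendsto_imp_eventually_ne[OF Q, of 0] simple by (simp add: Q_def)
  moreover have "eventually (\<lambda>s. \<forall>\<mu>. P s \<mu> = (\<mu> - r s) * (\<mu> - u s) * (\<mu> - v s)) (at t)"
    using factor by (simp add: eventually_at_filter eventually_mono)
  ultimately have "eventually (\<lambda>s. (r s - r t) / (s - t) = - ((P s (r t) - P t (r t)) / (s - t)) / Q s) (at t)"
  proof eventually_elim
    case (elim s)
    have e: "P s (r t) = (r t - r s) * Q s"
      using elim(2)[rule_format, of "r t"] by (simp add: algebra_simps Q_def)
    show ?case using elim(1) unfolding e P0 by (cases "s = t") (simp_all add: field_simps)
  qed
  moreover have "((\<lambda>s. - ((P s (r t) - P t (r t)) / (s - t)) / Q s) \<longlongrightarrow> - P' / Q t) (at t)"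
    using deriv simple by (intro tendsto_intros Q) (auto simp: Q_def has_field_derivative_iff)
  ultimately have "((\<lambda>s. (r s - r t) / (s - t)) \<longlongrightarrow> - P' / Q t) (at t)"
    by (simp add: tendsto_cong)
  thus ?thesis by (simp add: has_field_derivative_iff Q_def)
qed

lemma DERIV_roots_of_cubic_family:
  fixes P :: "real \<Rightarrow> real \<Rightarrow> real" and r1 r2 r3 :: "real \<Rightarrow> real"
  assumes factor: "eventually (\<lambda>s. \<forall>\<mu>. P s \<mu> = (\<mu> - r1 s) * (\<mu> - r2 s) * (\<mu> - r3 s)) (nhds t)"
    and deriv: "\<And>\<mu>. ((\<lambda>s. P s \<mu>) has_real_derivative P' \<mu>) (at t)"
    and sep: "eventually (\<lambda>s. \<delta> \<le> \<bar>r1 t - r2 s\<bar> \<and> \<delta> \<le> \<bar>r1 t - r3 s\<bar> \<and> \<delta> \<le> \<bar>r2 t - r1 s\<bar> \<and>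
      \<delta> \<le> \<bar>r2 t - r3 s\<bar> \<and> \<delta> \<le> \<bar>r3 t - r1 s\<bar> \<and> \<delta> \<le> \<bar>r3 t - r2 s\<bar>) (nhds t)"
    and "\<delta> > 0"
  shows "(r1 has_real_derivative - P' (r1 t) / ((r1 t - r2 t) * (r1 t - r3 t))) (at t)"
    and "(r2 has_real_derivative - P' (r2 t) / ((r2 t - r1 t) * (r2 t - r3 t))) (at t)"
    and "(r3 has_real_derivative - P' (r3 t) / ((r3 t - r1 t) * (r3 t - r2 t))) (at t)"
proof -
  have factor2: "eventually (\<lambda>s. \<forall>\<mu>. P s \<mu> = (\<mu> - r2 s) * (\<mu> - r1 s) * (\<mu> - r3 s)) (nhds t)"
    and factor3: "eventually (\<lambda>s. \<forall>\<mu>. P s \<mu> = (\<mu> - r3 s) * (\<mu> - r1 s) * (\<mu> - r2 s)) (nhds t)"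
    using factor by (auto elim!: eventually_mono simp: algebra_simps)
  have cont: "isCont (\<lambda>s. P s \<mu>) t" for \<mu> using deriv by (rule DERIV_isCont)
  have cont1: "isCont r1 t"
    by (rule isCont_simple_root[OF factor cont _ \<open>\<delta> > 0\<close>]) (use sep in \<open>auto elim: eventually_mono\<close>)
  have cont2: "isCont r2 t"
    by (rule isCont_simple_root[OF factor2 cont _ \<open>\<delta> > 0\<close>]) (use sep in \<open>auto elim: eventually_mono\<close>)
  have cont3: "isCont r3 t"
    by (rule isCont_simple_root[OF factor3 cont _ \<open>\<delta> > 0\<close>]) (use sep in \<open>auto elim: eventually_mono\<close>)
  have "r1 t \<noteq> r2 t" "r1 t \<noteq> r3 t" "r2 t \<noteq> r3 t"
    using eventually_nhds_x_imp_x[OF sep] \<open>\<delta> > 0\<close> by auto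
  then show "(r1 has_real_derivative - P' (r1 t) / ((r1 t - r2 t) * (r1 t - r3 t))) (at t)"
    and "(r2 has_real_derivative - P' (r2 t) / ((r2 t - r1 t) * (r2 t - r3 t))) (at t)"
    and "(r3 has_real_derivative - P' (r3 t) / ((r3 t - r1 t) * (r3 t - r2 t))) (at t)"
    using DERIV_simple_root[OF factor deriv cont2 cont3] DERIV_simple_root[OF factor2 deriv cont1 cont3]
      DERIV_simple_root[OF factor3 deriv cont1 cont2] by auto
qed

section \<open>Derivatives of the eigenvalues along a curve\<close>

definition S_charpoly_dx :: "real \<Rightarrow> real \<Rightarrow> real" where
  "S_charpoly_dx x \<mu> = (6 + 4*x + 6*x^2) * \<mu> - (2 + 2*x) * \<mu>^2 - 12*x^2"

lemma DERIV_S_charpoly: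
  assumes "(\<alpha> has_real_derivative \<alpha>') (at t)" "(\<beta> has_real_derivative \<beta>') (at t)"
  shows "((\<lambda>s. S_charpoly (\<alpha> s) (\<beta> s) \<mu>) has_real_derivative
           \<alpha>' * S_charpoly_dx (\<alpha> t) \<mu> - 18 * (\<beta> t * \<beta>') * (\<mu> - 3)) (at t)"
  unfolding S_charpoly_def
  by (rule derivative_eq_intros assms refl)+
    (simp add: S_charpoly_dx_def algebra_simps power2_eq_square power3_eq_cube)

lemma abs_S_charpoly_dx_le:
  assumes "0 \<le> x" "x \<le> 1/10" "0 \<le> \<mu>"
  shows "\<bar>S_charpoly_dx x \<mu>\<bar> \<le> 3*\<mu>^2 + 7*\<mu> + 12*x^2"
proof -
  have "x^2 \<le> x/10" using mult_left_mono[OF assms(2) assms(1)] by (simp add: power2_eq_square)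
  have "(2 + 2*x) * \<mu>^2 \<le> 3*\<mu>^2" by (rule mult_right_mono) (use assms in auto)
  moreover have "(6 + 4*x + 6*x^2) * \<mu> \<le> 7*\<mu>"
    by (rule mult_right_mono) (use assms \<open>x^2 \<le> x/10\<close> in auto)
  moreover have "0 \<le> (2 + 2*x) * \<mu>^2" "0 \<le> (6 + 4*x + 6*x^2) * \<mu>" "0 \<le> x^2"
    using assms by auto
  ultimately show ?thesis unfolding S_charpoly_dx_def abs_le_iff by linarith
qed

lemma abs_S_charpoly_time_deriv_le:
  assumes "\<bar>\<alpha>'\<bar> \<le> L" "\<bar>y * \<beta>'\<bar> \<le> K * x^2" "0 \<le> x" "x \<le> 1/10" "0 \<le> \<mu>" "\<mu> \<le> 6"
  shows "\<bar>\<alpha>' * S_charpoly_dx x \<mu> - 18 * (y * \<beta>') * (\<mu> - 3)\<bar>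
           \<le> L * (3*\<mu>^2 + 7*\<mu> + 12*x^2) + 54 * K * x^2"
proof -
  have "\<bar>\<alpha>' * S_charpoly_dx x \<mu>\<bar> \<le> L * (3*\<mu>^2 + 7*\<mu> + 12*x^2)"
    unfolding abs_mult using assms abs_S_charpoly_dx_le[of x \<mu>] by (intro mult_mono) auto
  moreover have "\<bar>18 * (y * \<beta>') * (\<mu> - 3)\<bar> = 18 * \<bar>y * \<beta>'\<bar> * \<bar>\<mu> - 3\<bar>"
    by (simp add: abs_mult)
  moreover have "\<dots> \<le> 18 * (K * x^2) * 3"
    using assms by (intro mult_mono) auto
  ultimately show ?thesis
    using abs_triangle_ineq4[of "\<alpha>' * S_charpoly_dx x \<mu>" "18 * (y * \<beta>') * (\<mu> - 3)"] by linarith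
qed

lemma abs_S_charpoly_time_deriv_le_on_root_intervals:
  fixes x y \<alpha>' \<beta>' L K :: real
  defines "P' \<equiv> \<lambda>\<mu>. \<alpha>' * S_charpoly_dx x \<mu> - 18 * (y * \<beta>') * (\<mu> - 3)"
  assumes \<alpha>': "\<bar>\<alpha>'\<bar> \<le> L" and \<beta>': "\<bar>y * \<beta>'\<bar> \<le> K * x^2" and x: "0 < x" "x \<le> 1/10"
  shows "0 \<le> \<mu> \<Longrightarrow> \<mu> \<le> x^2 \<Longrightarrow> \<bar>P' \<mu>\<bar> \<le> (22 * L + 54 * K) * x^2"
    and "x \<le> \<mu> \<Longrightarrow> \<mu> \<le> 3*x \<Longrightarrow> \<bar>P' \<mu>\<bar> \<le> (25 * L + 6 * K) * x"
    and "2 \<le> \<mu> \<Longrightarrow> \<mu> \<le> 5 \<Longrightarrow> \<bar>P' \<mu>\<bar> \<le> 111 * L + 54 * K"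
proof -
  have L: "0 \<le> L" using \<alpha>' by linarith
  have "0 \<le> K * x^2" using \<beta>' by linarith
  hence K: "0 \<le> K" using x by (simp add: zero_le_mult_iff)
  have x2: "x^2 \<le> x/10" using x by (simp add: power2_eq_square)
  have bound: "\<bar>P' \<mu>\<bar> \<le> L * B + 54 * K * x^2" if "0 \<le> \<mu>" "\<mu> \<le> 6" "3*\<mu>^2 + 7*\<mu> + 12*x^2 \<le> B" for \<mu> B
  proof -
    have "L * (3*\<mu>^2 + 7*\<mu> + 12*x^2) \<le> L * B" using L that(3) by (rule mult_left_mono[rotated])
    thus ?thesis
      using abs_S_charpoly_time_deriv_le[OF \<alpha>' \<beta>' _ x(2) that(1,2)] x unfolding P'_def by linarith
  qed
  show "\<bar>P' \<mu>\<bar> \<le> (22 * L + 54 * K) * x^2" if "0 \<le> \<mu>" "\<mu> \<le> x^2"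
  proof -
    have sq: "\<mu>^2 \<le> x^2" using that x2 x by (intro power_mono) auto
    have "\<bar>P' \<mu>\<bar> \<le> L * (22 * x^2) + 54 * K * x^2" by (rule bound) (use sq that x2 x in linarith)+
    thus ?thesis by (simp add: algebra_simps)
  qed
  show "\<bar>P' \<mu>\<bar> \<le> (25 * L + 6 * K) * x" if "x \<le> \<mu>" "\<mu> \<le> 3*x"
  proof -
    have "\<mu>^2 \<le> (3*x)^2" using that x by (intro power_mono) auto
    hence sq: "\<mu>^2 \<le> 9 * x^2" by (simp add: power_mult_distrib)
    have "\<bar>P' \<mu>\<bar> \<le> L * (25 * x) + 54 * K * x^2" by (rule bound) (use sq that x2 x in linarith)+
    moreover have "K * x^2 \<le> K * (x/10)" using K x2 by (rule mult_left_mono[rotated])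
    moreover have "0 \<le> K * x" using K x by simp
    ultimately show ?thesis by (simp add: algebra_simps)
  qed
  show "\<bar>P' \<mu>\<bar> \<le> 111 * L + 54 * K" if "2 \<le> \<mu>" "\<mu> \<le> 5"
  proof -
    have sq: "\<mu>^2 \<le> 25" using power_mono[of \<mu> 5 2] that by simp
    have "\<bar>P' \<mu>\<bar> \<le> L * 111 + 54 * K * x^2" by (rule bound) (use sq that x2 x in linarith)+
    also have "54 * K * x^2 \<le> 54 * K" using K x2 x by (simp add: mult_left_le)
    finally show ?thesis by (simp add: algebra_simps)
  qed
qed

lemma Smat_eigs_DERIV:
  fixes \<alpha> \<beta> :: "real \<Rightarrow> real" and \<alpha>' \<beta>' t :: real
  defines "r1 \<equiv> \<lambda>s. lam1 (Smat (\<alpha> s) (\<beta> s))" and "r2 \<equiv> \<lambda>s. lam2 (Smat (\<alpha> s) (\<beta> s))"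
    and "r3 \<equiv> \<lambda>s. lam3 (Smat (\<alpha> s) (\<beta> s))"
    and "P' \<equiv> \<lambda>\<mu>. \<alpha>' * S_charpoly_dx (\<alpha> t) \<mu> - 18 * (\<beta> t * \<beta>') * (\<mu> - 3)"
  assumes \<alpha>': "(\<alpha> has_real_derivative \<alpha>') (at t)" and \<beta>': "(\<beta> has_real_derivative \<beta>') (at t)"
    and small: "\<alpha> t < 1/10"
    and cusp: "eventually (\<lambda>s. 0 < \<alpha> s \<and> 27 * (\<beta> s)^2 \<le> 4 * (\<alpha> s)^3) (nhds t)"
  shows "(r1 has_real_derivative - P' (r1 t) / ((r1 t - r2 t) * (r1 t - r3 t))) (at t)"
    and "(r2 has_real_derivative - P' (r2 t) / ((r2 t - r1 t) * (r2 t - r3 t))) (at t)"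
    and "(r3 has_real_derivative - P' (r3 t) / ((r3 t - r1 t) * (r3 t - r2 t))) (at t)"
proof -
  define x where "x = \<alpha> t"
  define P where "P s \<mu> = S_charpoly (\<alpha> s) (\<beta> s) \<mu>" for s \<mu>
  have x: "0 < x" "x < 1/10" "27 * (\<beta> t)^2 \<le> 4 * x^3"
    using eventually_nhds_x_imp_x[OF cusp] small by (auto simp: x_def)
  have "x^2 < x / 10" using x by (simp add: power2_eq_square)
  have at_t: "r1 t < x^2" "x < r2 t" "r2 t < 3*x" "2 < r3 t"
    using Smat_eigs_location[of x "\<beta> t"] x by (simp_all add: r1_def r2_def r3_def x_def)
  have "(\<alpha> \<longlongrightarrow> x) (nhds t)"
    using DERIV_isCont[OF \<alpha>'] by (simp add: isCont_def tendsto_at_iff_tendsto_nhds x_def)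
  hence "eventually (\<lambda>s. x/2 < \<alpha> s \<and> \<alpha> s < 2*x \<and> \<alpha> s < 1/10) (nhds t)"
    using x by (intro eventually_conj order_tendstoD) auto
  with cusp have near: "eventually (\<lambda>s. (\<forall>\<mu>. P s \<mu> = (\<mu> - r1 s) * (\<mu> - r2 s) * (\<mu> - r3 s)) \<and>
      0 \<le> r1 s \<and> r1 s < x/5 \<and> x/2 < r2 s \<and> r2 s < 3/10 \<and> 2 < r3 s) (nhds t)"
  proof eventually_elim
    case (elim s)
    hence "(\<alpha> s)^2 < \<alpha> s / 10" by (simp add: power2_eq_square)
    with elim show ?case
      using Smat_eigs_location[of "\<alpha> s" "\<beta> s"] by (auto simp: r1_def r2_def r3_def P_def)
  qed
  have sep: "eventually (\<lambda>s. 2/5*x \<le> \<bar>r1 t - r2 s\<bar> \<and> 2/5*x \<le> \<bar>r1 t - r3 s\<bar> \<and>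
      2/5*x \<le> \<bar>r2 t - r1 s\<bar> \<and> 2/5*x \<le> \<bar>r2 t - r3 s\<bar> \<and>
      2/5*x \<le> \<bar>r3 t - r1 s\<bar> \<and> 2/5*x \<le> \<bar>r3 t - r2 s\<bar>) (nhds t)"
    using near by eventually_elim (use at_t x \<open>x^2 < x / 10\<close> in auto)
  have deriv: "((\<lambda>s. P s \<mu>) has_real_derivative P' \<mu>) (at t)" for \<mu>
    unfolding P_def P'_def by (rule DERIV_S_charpoly[OF \<alpha>' \<beta>'])
  have factor: "eventually (\<lambda>s. \<forall>\<mu>. P s \<mu> = (\<mu> - r1 s) * (\<mu> - r2 s) * (\<mu> - r3 s)) (nhds t)"
    using near by (rule eventually_mono) simp
  have "0 < 2/5*x" using x by simp
  from DERIV_roots_of_cubic_family[OF factor deriv sep this]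
  show "(r1 has_real_derivative - P' (r1 t) / ((r1 t - r2 t) * (r1 t - r3 t))) (at t)"
    and "(r2 has_real_derivative - P' (r2 t) / ((r2 t - r1 t) * (r2 t - r3 t))) (at t)"
    and "(r3 has_real_derivative - P' (r3 t) / ((r3 t - r1 t) * (r3 t - r2 t))) (at t)" .
qed

lemma abs_minus_divide_le:
  fixes N Q B c :: real
  assumes "\<bar>N\<bar> \<le> B * c" "c \<le> \<bar>Q\<bar>" "0 < c"
  shows "\<bar>- N / Q\<bar> \<le> B"
proof -
  have "\<bar>- N / Q\<bar> = \<bar>N\<bar> / \<bar>Q\<bar>" by simp
  also have "\<dots> \<le> B * c / c" using assms by (intro frac_le) auto
  finally show ?thesis using assms(3) by simp
qed

lemma abs_quotients_at_S_roots_le: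
  fixes x C r1 r2 r3 :: real and P' :: "real \<Rightarrow> real"
  assumes x: "0 < x" "x < 1/10"
    and roots: "0 \<le> r1" "r1 < x^2" "x < r2" "r2 < 3*x" "2 < r3" "r3 < 5"
    and P': "\<bar>P' r1\<bar> \<le> C * x^2" "\<bar>P' r2\<bar> \<le> C * x" "\<bar>P' r3\<bar> \<le> C"
  shows "\<bar>- P' r1 / ((r1 - r2) * (r1 - r3))\<bar> \<le> C * x"
    and "\<bar>- P' r2 / ((r2 - r1) * (r2 - r3))\<bar> \<le> C"
    and "\<bar>- P' r3 / ((r3 - r1) * (r3 - r2))\<bar> \<le> C"
proof -
  have "x^2 < x / 10" using x by (simp add: power2_eq_square)
  have "9/10 * x * (19/10) \<le> (r2 - r1) * (r3 - r1)"
    using roots \<open>x^2 < x / 10\<close> x by (intro mult_mono) auto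
  hence "x \<le> \<bar>(r1 - r2) * (r1 - r3)\<bar>" using x by (simp add: abs_mult algebra_simps)
  moreover have "\<bar>P' r1\<bar> \<le> C * x * x" using P'(1) by (simp add: power2_eq_square mult.assoc)
  ultimately show "\<bar>- P' r1 / ((r1 - r2) * (r1 - r3))\<bar> \<le> C * x"
    using x by (intro abs_minus_divide_le) auto
  have "9/10 * x * (17/10) \<le> (r2 - r1) * (r3 - r2)"
    using roots \<open>x^2 < x / 10\<close> x by (intro mult_mono) auto
  hence "x \<le> \<bar>(r2 - r1) * (r2 - r3)\<bar>" using x by (simp add: abs_mult algebra_simps)
  with P'(2) x show "\<bar>- P' r2 / ((r2 - r1) * (r2 - r3))\<bar> \<le> C"
    by (intro abs_minus_divide_le) auto
  have "1 * 1 \<le> (r3 - r1) * (r3 - r2)"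
    using roots \<open>x^2 < x / 10\<close> x by (intro mult_mono) auto
  with P'(3) show "\<bar>- P' r3 / ((r3 - r1) * (r3 - r2))\<bar> \<le> C"
    by (intro abs_minus_divide_le[where c = 1]) auto
qed

lemma Smat_eigs_deriv_bounds:
  fixes \<alpha> \<alpha>' \<beta> \<beta>' \<beta>'' :: "real \<Rightarrow> real" and I :: "real set" and L M t :: real
  defines "C \<equiv> 111 * L + 54 * ((1 + L)^2 + 1 + M)"
  assumes I: "open I" and t: "t \<in> I" and sub: "{t..t + \<alpha> t} \<subseteq> I" and small: "\<alpha> t < 1/10"
    and \<alpha>': "\<And>s. s \<in> I \<Longrightarrow> (\<alpha> has_real_derivative \<alpha>' s) (at s)" "\<And>s. s \<in> I \<Longrightarrow> \<bar>\<alpha>' s\<bar> \<le> L"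
    and \<beta>': "\<And>s. s \<in> I \<Longrightarrow> (\<beta> has_real_derivative \<beta>' s) (at s)"
    and \<beta>'': "\<And>s. s \<in> I \<Longrightarrow> (\<beta>' has_real_derivative \<beta>'' s) (at s)" "\<And>s. s \<in> I \<Longrightarrow> \<bar>\<beta>'' s\<bar> \<le> M"
    and cusp: "\<And>s. s \<in> I \<Longrightarrow> 0 < \<alpha> s \<and> 27 * (\<beta> s)^2 \<le> 4 * (\<alpha> s)^3"
  shows "\<exists>D1 D2 D3.
      ((\<lambda>s. lam1 (Smat (\<alpha> s) (\<beta> s))) has_real_derivative D1) (at t) \<and>
      ((\<lambda>s. lam2 (Smat (\<alpha> s) (\<beta> s))) has_real_derivative D2) (at t) \<and>
      ((\<lambda>s. lam3 (Smat (\<alpha> s) (\<beta> s))) has_real_derivative D3) (at t) \<and>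
      \<bar>D1\<bar> \<le> C * \<alpha> t \<and> \<bar>D2\<bar> \<le> C \<and> \<bar>D3\<bar> \<le> C"
proof -
  define x where "x = \<alpha> t"
  define r1 where "r1 = lam1 (Smat x (\<beta> t))"
  define r2 where "r2 = lam2 (Smat x (\<beta> t))"
  define r3 where "r3 = lam3 (Smat x (\<beta> t))"
  define K where "K = (1 + L)^2 + 1 + M"
  define P' where "P' \<mu> = \<alpha>' t * S_charpoly_dx x \<mu> - 18 * (\<beta> t * \<beta>' t) * (\<mu> - 3)" for \<mu>
  have x: "0 < x" "x < 1/10" "27 * (\<beta> t)^2 \<le> 4 * x^3" using cusp[OF t] small by (auto simp: x_def)
  have "x^2 < x / 10" using x by (simp add: power2_eq_square)
  have roots: "0 \<le> r1" "r1 < x^2" "x < r2" "r2 < 3*x" "2 < r3" "r3 < 5"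
    using Smat_eigs_location[OF x(1) _ x(3)] x(2) by (simp_all add: r1_def r2_def r3_def)
  have "eventually (\<lambda>s. s \<in> I) (nhds t)" using I t by (rule eventually_nhds_in_open)
  hence "eventually (\<lambda>s. 0 < \<alpha> s \<and> 27 * (\<beta> s)^2 \<le> 4 * (\<alpha> s)^3) (nhds t)"
    by (rule eventually_mono) (use cusp in blast)
  note derivs = Smat_eigs_DERIV[OF \<alpha>'(1)[OF t] \<beta>'(1)[OF t] small this]
  have cube: "0 \<le> \<alpha> s \<and> (\<beta> s)^2 \<le> (\<alpha> s)^3" if "s \<in> I" for s
  proof -
    have "0 < (\<alpha> s)^3" using cusp[OF that] by simp
    thus ?thesis using cusp[OF that] by linarith
  qed
  have "\<bar>\<beta> t * \<beta>' t\<bar> \<le> K * x^2" unfolding K_def x_def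
    by (rule abs_mult_deriv_le_of_sq_le_cube[where \<alpha>'=\<alpha>' and \<beta>''=\<beta>''])
      (use x sub \<alpha>' \<beta>' \<beta>'' cube in \<open>auto simp: x_def subset_iff\<close>)
  note P'_bound = abs_S_charpoly_time_deriv_le_on_root_intervals[OF \<alpha>'(2)[OF t] this x(1) less_imp_le[OF x(2)],
      folded P'_def]
  have L: "0 \<le> L" and K: "0 \<le> K" using \<alpha>'(2)[OF t] \<beta>''(2)[OF t] by (auto simp: K_def)
  hence C: "22 * L + 54 * K \<le> C" "25 * L + 6 * K \<le> C" "111 * L + 54 * K \<le> C"
    by (simp_all add: C_def K_def)
  have P'1: "\<bar>P' r1\<bar> \<le> C * x^2"
    using P'_bound(1)[OF roots(1) less_imp_le[OF roots(2)]] mult_right_mono[OF C(1), of "x^2"] by simp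
  have P'2: "\<bar>P' r2\<bar> \<le> C * x"
    using P'_bound(2)[OF less_imp_le[OF roots(3)] less_imp_le[OF roots(4)]]
      mult_right_mono[OF C(2) less_imp_le[OF x(1)]] by linarith
  have P'3: "\<bar>P' r3\<bar> \<le> C"
    using P'_bound(3)[OF less_imp_le[OF roots(5)] less_imp_le[OF roots(6)]] C(3) by simp
  from abs_quotients_at_S_roots_le[OF x(1,2) roots P'1 P'2 P'3]
  show ?thesis using derivs
    unfolding r1_def r2_def r3_def P'_def x_def by blast
qed

section \<open>Time slices of smooth functions\<close>

lemma has_real_derivative_partial_fst:
  fixes f :: "real \<times> 'a::real_normed_vector \<Rightarrow> real"
  assumes "f differentiable (at (t, X))"
  shows "((\<lambda>s. f (s, X)) has_real_derivative frechet_derivative f (at (t, X)) (1, 0)) (at t)"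
proof -
  define F where "F = frechet_derivative f (at (t, X))"
  have F: "(f has_derivative F) (at (t, X))"
    using assms unfolding F_def by (rule frechet_derivative_works[THEN iffD1])
  have "((\<lambda>s. (s, X)) has_derivative (\<lambda>h. (h, 0))) (at t)"
    by (intro derivative_eq_intros) auto
  from diff_chain_at[OF this, of f F] F
  have "((\<lambda>s. f (s, X)) has_derivative (\<lambda>h. F (h, 0))) (at t)" by (simp add: o_def)
  moreover have "F (h, 0) = F (1, 0) * h" for h
    using linear_scale[OF has_derivative_linear[OF F], of h "(1, 0)"] by simp
  hence "(\<lambda>h. F (h, 0)) = (\<lambda>h. F (1, 0) * h)" by (intro ext) assumption
  ultimately show ?thesis unfolding has_field_derivative_def F_def by simp
qed

lemma smooth_bdd_on_dderiv_differentiable: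
  assumes "smooth_bdd_on U f" "set vs \<subseteq> Basis" "p \<in> U"
  shows "dderiv vs f differentiable (at p)"
  using assms unfolding smooth_bdd_on_def by simp

lemma smooth_bdd_on_dderiv_bounded:
  assumes "smooth_bdd_on U f" "set vs \<subseteq> Basis"
  obtains B where "\<And>p. p \<in> U \<Longrightarrow> \<bar>dderiv vs f p\<bar> \<le> B"
proof -
  have "bounded (dderiv vs f ` U)" using assms unfolding smooth_bdd_on_def by simp
  then obtain B where "\<forall>y\<in>dderiv vs f ` U. norm y \<le> B" unfolding bounded_iff by blast
  thus ?thesis by (intro that[of B]) auto
qed

lemma smooth_bdd_on_continuous_on:
  assumes "smooth_bdd_on U f"
  shows "continuous_on U f"
  using smooth_bdd_on_dderiv_differentiable[OF assms, of "[]"]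
  by (auto intro!: continuous_at_imp_continuous_on differentiable_imp_continuous_within)

lemma smooth_bdd_on_time_derivatives:
  fixes f :: "real \<times> 'a::euclidean_space \<Rightarrow> real"
  assumes "smooth_bdd_on U f" "(s, X) \<in> U"
  shows "((\<lambda>s. f (s, X)) has_real_derivative dderiv [(1, 0)] f (s, X)) (at s)"
    and "((\<lambda>s. dderiv [(1, 0)] f (s, X)) has_real_derivative dderiv [(1, 0), (1, 0)] f (s, X)) (at s)"
proof -
  have "(1, 0) \<in> (Basis :: (real \<times> 'a) set)" by (simp add: Basis_prod_def)
  hence "f differentiable (at (s, X))" "dderiv [(1, 0)] f differentiable (at (s, X))"
    using smooth_bdd_on_dderiv_differentiable[OF assms(1) _ assms(2), of "[]"]
      smooth_bdd_on_dderiv_differentiable[OF assms(1) _ assms(2), of "[(1, 0)]"] by auto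
  from this[THEN has_real_derivative_partial_fst]
  show "((\<lambda>s. f (s, X)) has_real_derivative dderiv [(1, 0)] f (s, X)) (at s)"
    and "((\<lambda>s. dderiv [(1, 0)] f (s, X)) has_real_derivative dderiv [(1, 0), (1, 0)] f (s, X)) (at s)"
    by simp_all
qed

lemma smooth_Smat_eigs_deriv_bounds:
  fixes fa fb :: "real \<times> 'a::euclidean_space \<Rightarrow> real" and I :: "real set"
  assumes sa: "smooth_bdd_on \<Omega> fa" and sb: "smooth_bdd_on \<Omega> fb"
    and L: "\<And>p. p \<in> \<Omega> \<Longrightarrow> \<bar>dderiv [(1, 0)] fa p\<bar> \<le> L"
    and M: "\<And>p. p \<in> \<Omega> \<Longrightarrow> \<bar>dderiv [(1, 0), (1, 0)] fb p\<bar> \<le> M"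
    and I: "open I" "t \<in> I" "{t..t + fa (t, X)} \<subseteq> I" "\<And>s. s \<in> I \<Longrightarrow> (s, X) \<in> \<Omega>"
    and cusp: "\<And>s. s \<in> I \<Longrightarrow> 0 < fa (s, X) \<and> 27 * (fb (s, X))^2 \<le> 4 * (fa (s, X))^3"
    and small: "fa (t, X) < 1/10"
  shows "\<exists>D1 D2 D3.
      ((\<lambda>s. lam1 (Smat (fa (s, X)) (fb (s, X)))) has_real_derivative D1) (at t) \<and>
      ((\<lambda>s. lam2 (Smat (fa (s, X)) (fb (s, X)))) has_real_derivative D2) (at t) \<and>
      ((\<lambda>s. lam3 (Smat (fa (s, X)) (fb (s, X)))) has_real_derivative D3) (at t) \<and>
      \<bar>D1\<bar> \<le> (111 * L + 54 * ((1 + L)^2 + 1 + M)) * fa (t, X) \<and>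
      \<bar>D2\<bar> \<le> 111 * L + 54 * ((1 + L)^2 + 1 + M) \<and> \<bar>D3\<bar> \<le> 111 * L + 54 * ((1 + L)^2 + 1 + M)"
  using I(1-3) small
proof (rule Smat_eigs_deriv_bounds[where \<alpha>' = "\<lambda>s. dderiv [(1, 0)] fa (s, X)"
      and \<beta>' = "\<lambda>s. dderiv [(1, 0)] fb (s, X)" and \<beta>'' = "\<lambda>s. dderiv [(1, 0), (1, 0)] fb (s, X)"])
  fix s assume "s \<in> I"
  with I(4) have s: "(s, X) \<in> \<Omega>" .
  from L[OF s] M[OF s] smooth_bdd_on_time_derivatives[OF sa s] smooth_bdd_on_time_derivatives[OF sb s]
  show "((\<lambda>s. fa (s, X)) has_real_derivative dderiv [(1, 0)] fa (s, X)) (at s)"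
    "\<bar>dderiv [(1, 0)] fa (s, X)\<bar> \<le> L"
    "((\<lambda>s. fb (s, X)) has_real_derivative dderiv [(1, 0)] fb (s, X)) (at s)"
    "((\<lambda>s. dderiv [(1, 0)] fb (s, X)) has_real_derivative dderiv [(1, 0), (1, 0)] fb (s, X)) (at s)"
    "\<bar>dderiv [(1, 0), (1, 0)] fb (s, X)\<bar> \<le> M"
    by simp_all
qed (use cusp in auto)

theorem lemma2p3:
  fixes a b :: "real \<Rightarrow> 'x::euclidean_space \<Rightarrow> real"
    and W :: "'x set" and Xbar :: 'x and c T :: real
  assumes "open W" and "Xbar \<in> W" and "c > 0" and "T > 0"
    and "smooth_bdd_on ({-c<..<T} \<times> W) (\<lambda>(t, X). a t X)"
    and "smooth_bdd_on ({-c<..<T} \<times> W) (\<lambda>(t, X). b t X)"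
    and "\<forall>t\<in>{0..<T}. \<forall>X\<in>W. 4 * (a t X) ^ 3 - 27 * (b t X) ^ 2 \<ge> 0"
    and "a 0 Xbar = 0"
    and "\<forall>t\<in>{0<..<T}. \<forall>X\<in>W. a t X > 0"
  shows "\<exists>U C. open U \<and> (0, Xbar) \<in> U \<and> C > 0 \<and>
    (\<forall>(t, X)\<in>U. t > 0 \<longrightarrow>
       (\<exists>D1 D2 D3.
          ((\<lambda>s. lam1 (Smat (a s X) (b s X))) has_real_derivative D1) (at t) \<and>
          ((\<lambda>s. lam2 (Smat (a s X) (b s X))) has_real_derivative D2) (at t) \<and>
          ((\<lambda>s. lam3 (Smat (a s X) (b s X))) has_real_derivative D3) (at t) \<and>
          \<bar>D1\<bar> \<le> C * a t X \<and> \<bar>D2\<bar> \<le> C \<and> \<bar>D3\<bar> \<le> C))"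
proof -
  define \<Omega> where "\<Omega> = {-c<..<T} \<times> W"
  define fa where "fa = (\<lambda>(t, X). a t X)"
  define fb where "fb = (\<lambda>(t, X). b t X)"
  have sa: "smooth_bdd_on \<Omega> fa" and sb: "smooth_bdd_on \<Omega> fb"
    using assms(5,6) by (simp_all add: \<Omega>_def fa_def fb_def)
  obtain L where L: "\<And>p. p \<in> \<Omega> \<Longrightarrow> \<bar>dderiv [(1, 0)] fa p\<bar> \<le> L"
    by (rule smooth_bdd_on_dderiv_bounded[OF sa, of "[(1, 0)]"]) (auto simp: Basis_prod_def)
  obtain M where M: "\<And>p. p \<in> \<Omega> \<Longrightarrow> \<bar>dderiv [(1, 0), (1, 0)] fb p\<bar> \<le> M"
    by (rule smooth_bdd_on_dderiv_bounded[OF sb, of "[(1, 0), (1, 0)]"]) (auto simp: Basis_prod_def)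
  have "(0, Xbar) \<in> \<Omega>" using assms(2-4) by (simp add: \<Omega>_def)
  hence "0 \<le> L" "0 \<le> M" using L M by (meson abs_ge_zero order_trans)+
  define C where "C = 111 * L + 54 * ((1 + L)^2 + 1 + M)"
  define U where "U = (\<Omega> \<inter> fa -` {..<min (1/10) (T/2)}) \<inter> ({..<T/2} \<times> UNIV)"
  have "open U" unfolding U_def using assms(1) smooth_bdd_on_continuous_on[OF sa]
    by (intro open_Int continuous_open_preimage open_Times) (auto simp: \<Omega>_def open_Times)
  moreover have "(0, Xbar) \<in> U" using \<open>(0, Xbar) \<in> \<Omega>\<close> assms(4,8) by (simp add: U_def fa_def)
  moreover have "C > 0"
    unfolding C_def using \<open>0 \<le> L\<close> \<open>0 \<le> M\<close> by (intro add_nonneg_pos mult_pos_pos add_pos_nonneg) auto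
  moreover have "\<exists>D1 D2 D3.
          ((\<lambda>s. lam1 (Smat (a s X) (b s X))) has_real_derivative D1) (at t) \<and>
          ((\<lambda>s. lam2 (Smat (a s X) (b s X))) has_real_derivative D2) (at t) \<and>
          ((\<lambda>s. lam3 (Smat (a s X) (b s X))) has_real_derivative D3) (at t) \<and>
          \<bar>D1\<bar> \<le> C * a t X \<and> \<bar>D2\<bar> \<le> C \<and> \<bar>D3\<bar> \<le> C"
    if "(t, X) \<in> U" "0 < t" for t X
  proof -
    have X: "X \<in> W" and small: "a t X < 1/10" "a t X < T/2" "t < T/2"
      using that(1) by (auto simp: U_def \<Omega>_def fa_def)
    have "{t..t + fa (t, X)} \<subseteq> {0<..<T}" using that(2) small by (auto simp: fa_def)
    from smooth_Smat_eigs_deriv_bounds[OF sa sb L M _ _ this] that(2) X small assms(3,7,9)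
    show ?thesis by (simp add: C_def \<Omega>_def fa_def fb_def)
  qed
  ultimately show ?thesis by blast
qed

end
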